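(* Let $N\ge2$, $R>0$ and $u\in C(B_R,(0,\infty))$. Suppose there exists $M\in O(N)$ such that $u_M$ is axially symmetric with respect to the $x_N$-axis (i.e. for every $\alpha\in(0,R]$ and $h\in[-\alpha,\alpha]$, $u_M$ is constant on $\{x\in S^{N-1}_\alpha:x_N=h\}$) and, for every $\alpha\in(0,R]$, the function $\theta\mapsto u_M(0_{N-2},\alpha\cos\theta,\alpha\sin\theta)$ is nonincreasing on $[\pi/2,3\pi/2]$. Then $u$ is separable in $B_R$.
   Context: $B_R$ is the closed ball of radius $R$ centered at $0$ in $\mathbb{R}^N$; $S^{N-1}_\alpha$ is the sphere of radius $\alpha$ centered at $0$; $O(N)$ is the orthogonal group and $u_M(x):=u(M^{-1}x)$; $0_k$ is the zero vector of $\mathbb{R}^k$. For an open half-space $H$, $\sigma_H$ is the reflection across $\partial H$. A function $u:B_R\to\mathbb{R}$ is separable in $B_R$ if for every open half-space $H\subset\mathbb{R}^N$ with $0\in\partial H$, either $u(x)\ge u(\sigma_Hx)$ for all $x\in H\cap B_R$, or $u(x)\le u(\sigma_Hx)$ for all $x\in H\cap B_R$. *)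

theory Defs
  imports "HOL-Analysis.Analysis"
begin

text \<open>R^N is modelled as real^'n with a linearly ordered finite index type;
  the coordinates x_N and x_{N-1} are the ones at the largest and the
  second largest index.\<close>

definition idxN :: "'n::{finite,linorder}" where
  "idxN = Max UNIV"

definition idxN1 :: "'n::{finite,linorder}" where
  "idxN1 = Max (UNIV - {idxN})"

definition rotfun :: "real^'n^'n \<Rightarrow> (real^'n \<Rightarrow> real) \<Rightarrow> real^'n \<Rightarrow> real" where
  "rotfun M u x = u (matrix_inv M *v x)"

definition reflect_hp :: "'a::real_inner \<Rightarrow> real \<Rightarrow> 'a \<Rightarrow> 'a" where
  "reflect_hp a b x = x - (2 * (inner a x - b) / (inner a a)) *\<^sub>R a"

definition separable_in :: "real \<Rightarrow> ('a::real_inner \<Rightarrow> real) \<Rightarrow> bool" where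
  "separable_in R u \<longleftrightarrow>
     (\<forall>a b. a \<noteq> 0 \<and> 0 \<in> frontier {x. inner a x > b} \<longrightarrow>
        (\<forall>x \<in> {x. inner a x > b} \<inter> cball 0 R. u x \<ge> u (reflect_hp a b x)) \<or>
        (\<forall>x \<in> {x. inner a x > b} \<inter> cball 0 R. u x \<le> u (reflect_hp a b x)))"

end

theory Submission
  imports Defs
begin

text \<open>Write v = u_M, so that u x = v (M x). Axial symmetry says that v y depends only
  on |y| and the height y_N, and the monotonicity along the meridian
  \<theta> \<mapsto> (0, \<alpha> cos \<theta>, \<alpha> sin \<theta>), on which the height sin \<theta> decreases from 1 to -1, says that
  v is nondecreasing in the height. Hence u x is a nondecreasing function of p \<bullet> x
  on each sphere, where p is the N-th row of M. A reflection \<sigma> across a hyperplane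
  a \<bullet> x = 0 through the origin preserves |x| and changes p \<bullet> x by
  -2 (a \<bullet> x)(a \<bullet> p) / |a|^2, so on the half-space a \<bullet> x > 0 the sign of u - u \<circ> \<sigma> is
  that of a \<bullet> p throughout.\<close>

lemma idxN1_neq_idxN:
  assumes "CARD('n::{finite,linorder}) \<ge> 2"
  shows "(idxN1::'n) \<noteq> idxN"
proof -
  have "UNIV - {idxN::'n} \<noteq> {}"
  proof
    assume "UNIV - {idxN::'n} = {}"
    then have "(UNIV::'n set) \<subseteq> {idxN}" by blast
    then have "CARD('n) \<le> 1" using card_mono[of "{idxN::'n}" UNIV] by simp
    with assms show False by simp
  qed
  then have "Max (UNIV - {idxN::'n}) \<in> UNIV - {idxN}" by (intro Max_in) auto
  then show ?thesis unfolding idxN1_def by simp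
qed

definition meridian_point :: "real \<Rightarrow> real \<Rightarrow> real^'n::{finite,linorder}" where
  "meridian_point \<alpha> \<theta> = (\<chi> i. if i = idxN then \<alpha> * sin \<theta> else if i = idxN1 then \<alpha> * cos \<theta> else 0)"

lemma meridian_point_height [simp]:
  "(meridian_point \<alpha> \<theta> :: real^'n::{finite,linorder}) $ idxN = \<alpha> * sin \<theta>"
  by (simp add: meridian_point_def)

lemma norm_meridian_point:
  assumes "(idxN1::'n) \<noteq> idxN" "\<alpha> \<ge> 0"
  shows "norm (meridian_point \<alpha> \<theta> :: real^'n::{finite,linorder}) = \<alpha>"
proof -
  let ?z = "meridian_point \<alpha> \<theta> :: real^'n::{finite,linorder}"
  have "inner ?z ?z = (\<Sum>i\<in>UNIV. ?z$i * ?z$i)" by (simp add: inner_vec_def)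
  also have "\<dots> = (\<Sum>i\<in>{idxN,idxN1}. ?z$i * ?z$i)"
    by (rule sum.mono_neutral_right) (auto simp: meridian_point_def)
  also have "\<dots> = (\<alpha> * sin \<theta>)\<^sup>2 + (\<alpha> * cos \<theta>)\<^sup>2"
    using assms(1) by (simp add: meridian_point_def power2_eq_square)
  also have "\<dots> = \<alpha>\<^sup>2"
    by (simp add: power_mult_distrib flip: distrib_left)
  finally show ?thesis using assms(2) by (simp add: norm_eq_sqrt_inner)
qed

lemma pi_minus_arcsin:
  assumes "-1 \<le> t" "t \<le> 1"
  shows "sin (pi - arcsin t) = t" and "pi/2 \<le> pi - arcsin t" and "pi - arcsin t \<le> 3*pi/2"
  using assms arcsin_bounded[OF assms] by (auto simp: sin_diff)

lemma le_if_height_le_on_sphere: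
  fixes v :: "real^'n::{finite,linorder} \<Rightarrow> real"
  assumes "(idxN1::'n) \<noteq> idxN"
    and axial: "\<forall>\<alpha> \<in> {0<..R}. \<forall>h \<in> {-\<alpha>..\<alpha>}. \<forall>x y.
              norm x = \<alpha> \<and> norm y = \<alpha> \<and> x $ idxN = h \<and> y $ idxN = h \<longrightarrow> v x = v y"
    and mono: "\<forall>\<alpha> \<in> {0<..R}. \<forall>\<theta>1 \<theta>2. pi/2 \<le> \<theta>1 \<and> \<theta>1 \<le> \<theta>2 \<and> \<theta>2 \<le> 3*pi/2 \<longrightarrow>
              v (meridian_point \<alpha> \<theta>2) \<le> v (meridian_point \<alpha> \<theta>1)"
    and "norm x = norm y" "norm x \<le> R" "x $ idxN \<le> y $ idxN"
  shows "v x \<le> v y"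
proof (cases "x = 0")
  case True
  with \<open>norm x = norm y\<close> show ?thesis by simp
next
  case False
  define \<alpha> where "\<alpha> = norm x"
  have \<alpha>: "\<alpha> \<in> {0<..R}" using False \<open>norm x \<le> R\<close> by (simp add: \<alpha>_def)
  define t where "t z = z $ idxN / \<alpha>" for z :: "(real, 'n) vec"
  \<comment> \<open>the angle in [pi/2, 3pi/2] at which the meridian reaches the height of z\<close>
  define \<theta> where "\<theta> z = pi - arcsin (t z)" for z
  have t_bounds: "-1 \<le> t z" "t z \<le> 1" if "norm z = \<alpha>" for z
    using component_le_norm_cart[of z idxN] that \<alpha> by (simp_all add: t_def abs_le_iff field_simps)
  have on_meridian: "v z = v (meridian_point \<alpha> (\<theta> z))" if "norm z = \<alpha>" for z
  proof -
    have "z $ idxN \<in> {-\<alpha>..\<alpha>}"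
      using t_bounds[OF that] \<alpha> by (simp add: t_def field_simps)
    moreover have "norm (meridian_point \<alpha> (\<theta> z) :: (real, 'n) vec) = \<alpha>"
      using norm_meridian_point[OF assms(1)] \<alpha> by simp
    moreover have "meridian_point \<alpha> (\<theta> z) $ idxN = z $ idxN"
      using pi_minus_arcsin(1)[OF t_bounds[OF that]] \<alpha> by (simp add: \<theta>_def t_def)
    ultimately show ?thesis
      using axial[rule_format, OF \<alpha>, of "z $ idxN" z "meridian_point \<alpha> (\<theta> z)"] that
      by simp
  qed
  have tx: "-1 \<le> t x" "t x \<le> 1" and ty: "-1 \<le> t y" "t y \<le> 1"
    using t_bounds \<open>norm x = norm y\<close> by (simp_all add: \<alpha>_def)
  have "t x \<le> t y"
    using \<open>x $ idxN \<le> y $ idxN\<close> \<alpha> by (simp add: t_def divide_right_mono)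
  then have "\<theta> y \<le> \<theta> x"
    using arcsin_le_arcsin[OF tx(1) _ ty(2)] by (simp add: \<theta>_def)
  moreover have "pi/2 \<le> \<theta> y" "\<theta> x \<le> 3*pi/2"
    using pi_minus_arcsin(2)[OF ty] pi_minus_arcsin(3)[OF tx] by (simp_all add: \<theta>_def)
  ultimately have "v (meridian_point \<alpha> (\<theta> x)) \<le> v (meridian_point \<alpha> (\<theta> y))"
    using mono \<alpha> by blast
  then show ?thesis
    using on_meridian[of x] on_meridian[of y] \<open>norm x = norm y\<close> by (simp add: \<alpha>_def)
qed

lemma norm_reflect_hp_0:
  fixes a x :: "'a::real_inner"
  assumes "a \<noteq> 0"
  shows "norm (reflect_hp a 0 x) = norm x"
proof -
  have "inner (reflect_hp a 0 x) (reflect_hp a 0 x) = inner x x"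
    using assms unfolding reflect_hp_def
    by (simp add: inner_diff_left inner_diff_right inner_commute field_simps power2_eq_square)
  then show ?thesis by (simp add: norm_eq_sqrt_inner)
qed

lemma inner_reflect_hp:
  "inner p (reflect_hp a b x) = inner p x - (2 * (inner a x - b) / inner a a) * inner a p"
  by (simp add: reflect_hp_def inner_diff_right inner_commute)

lemma separable_in_if_mono_on_spheres:
  fixes u :: "'a::real_inner \<Rightarrow> real"
  assumes mono: "\<And>x y. norm x = norm y \<Longrightarrow> norm x \<le> R \<Longrightarrow> inner p x \<le> inner p y \<Longrightarrow> u x \<le> u y"
  shows "separable_in R u"
  unfolding separable_in_def
proof (intro allI impI)
  fix a :: 'a and b
  assume "a \<noteq> 0 \<and> 0 \<in> frontier {x. inner a x > b}"
  then have "a \<noteq> 0" and "b = 0" using frontier_halfspace_gt[of a b] by auto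
  let ?H = "{x. inner a x > b} \<inter> cball 0 R"
  have \<sigma>: "norm (reflect_hp a b x) = norm x" "norm x \<le> R"
    "inner p (reflect_hp a b x) = inner p x - (2 * inner a x / inner a a) * inner a p"
    "2 * inner a x / inner a a \<ge> 0"
    if "x \<in> ?H" for x
    using that \<open>a \<noteq> 0\<close> \<open>b = 0\<close> norm_reflect_hp_0 by (simp_all add: inner_reflect_hp)
  consider "inner a p \<ge> 0" | "inner a p \<le> 0" by linarith
  then show "(\<forall>x \<in> ?H. u x \<ge> u (reflect_hp a b x)) \<or> (\<forall>x \<in> ?H. u x \<le> u (reflect_hp a b x))"
  proof cases
    case 1
    have "u (reflect_hp a b x) \<le> u x" if "x \<in> ?H" for x
      using mono \<sigma>[OF that] mult_nonneg_nonneg[OF \<sigma>(4)[OF that] 1] by simp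
    then show ?thesis by blast
  next
    case 2
    have "u x \<le> u (reflect_hp a b x)" if "x \<in> ?H" for x
      using mono \<sigma>[OF that] mult_nonneg_nonpos[OF \<sigma>(4)[OF that] 2] by simp
    then show ?thesis by blast
  qed
qed

lemma matrix_inv_orthogonal:
  fixes M :: "real^'n^'n"
  assumes "orthogonal_matrix M"
  shows "matrix_inv M = transpose M"
proof -
  have "M ** matrix_inv M = mat 1 \<and> matrix_inv M ** M = mat 1"
    unfolding matrix_inv_def
    by (rule someI[of _ "transpose M"]) (use assms in \<open>simp add: orthogonal_matrix_def\<close>)
  then have left_inv: "matrix_inv M ** M = mat 1" ..
  have "matrix_inv M = matrix_inv M ** (M ** transpose M)"
    using assms by (simp add: orthogonal_matrix_def)
  also have "\<dots> = transpose M"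
    using left_inv by (simp add: matrix_mul_assoc)
  finally show ?thesis .
qed

lemma rotfun_orthogonal_apply:
  assumes "orthogonal_matrix M"
  shows "rotfun M u (M *v x) = u x"
  using assms
  by (simp add: rotfun_def matrix_inv_orthogonal matrix_vector_mul_assoc orthogonal_matrix)

lemma norm_orthogonal_matrix_vector_mul:
  fixes M :: "real^'n^'n"
  assumes "orthogonal_matrix M"
  shows "norm (M *v x) = norm x"
  using assms orthogonal_transformation_norm[of "(*v) M"]
  by (simp add: orthogonal_transformation_matrix)

theorem theorem2p2:
  fixes u :: "real^('n::{finite,linorder}) \<Rightarrow> real" and R :: real
  assumes "CARD('n) \<ge> 2"
    and "R > 0"
    and "continuous_on (cball 0 R) u"
    and "\<forall>x \<in> cball 0 R. u x > 0"
    and "\<exists>M :: real^('n::{finite,linorder})^('n::{finite,linorder}). orthogonal_matrix M \<and>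
          (\<forall>\<alpha> \<in> {0<..R}. \<forall>h \<in> {-\<alpha>..\<alpha>}. \<forall>x y.
              norm x = \<alpha> \<and> norm y = \<alpha> \<and> x $ idxN = h \<and> y $ idxN = h \<longrightarrow>
              rotfun M u x = rotfun M u y) \<and>
          (\<forall>\<alpha> \<in> {0<..R}. \<forall>\<theta>1 \<theta>2. pi/2 \<le> \<theta>1 \<and> \<theta>1 \<le> \<theta>2 \<and> \<theta>2 \<le> 3*pi/2 \<longrightarrow>
              rotfun M u (\<chi> i. if i = idxN then \<alpha> * sin \<theta>2 else if i = idxN1 then \<alpha> * cos \<theta>2 else 0)
              \<le> rotfun M u (\<chi> i. if i = idxN then \<alpha> * sin \<theta>1 else if i = idxN1 then \<alpha> * cos \<theta>1 else 0))"
  shows "separable_in R u"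
proof -
  obtain M where M: "orthogonal_matrix M"
    and axial: "\<forall>\<alpha> \<in> {0<..R}. \<forall>h \<in> {-\<alpha>..\<alpha>}. \<forall>x y.
              norm x = \<alpha> \<and> norm y = \<alpha> \<and> x $ idxN = h \<and> y $ idxN = h \<longrightarrow>
              rotfun M u x = rotfun M u y"
    and mono: "\<forall>\<alpha> \<in> {0<..R}. \<forall>\<theta>1 \<theta>2. pi/2 \<le> \<theta>1 \<and> \<theta>1 \<le> \<theta>2 \<and> \<theta>2 \<le> 3*pi/2 \<longrightarrow>
              rotfun M u (meridian_point \<alpha> \<theta>2) \<le> rotfun M u (meridian_point \<alpha> \<theta>1)"
    using assms(5) unfolding meridian_point_def by blast
  show ?thesis
  proof (rule separable_in_if_mono_on_spheres[where p = "M $ idxN"])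
    fix x y
    assume "norm x = norm y" "norm x \<le> R" "inner (M $ idxN) x \<le> inner (M $ idxN) y"
    then have "rotfun M u (M *v x) \<le> rotfun M u (M *v y)"
      using le_if_height_le_on_sphere[OF idxN1_neq_idxN[OF assms(1)] axial mono]
      by (simp add: norm_orthogonal_matrix_vector_mul[OF M] matrix_vector_mul_component)
    then show "u x \<le> u y"
      by (simp add: rotfun_orthogonal_apply[OF M])
  qed
qed

end
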